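(* Let $H$ be an abelian subgroup of $\operatorname{Sym}_n$ and let $S=S_n(H)$. Then $S$ is cancellative if and only if $H_1=H_n=\{\mathrm{id}\}$.
   Context: For a subset $H\subseteq \operatorname{Sym}_n$, $S_n(H)$ denotes the monoid with presentation $\langle a_1,\dots,a_n \mid a_1a_2\cdots a_n = a_{\sigma(1)}a_{\sigma(2)}\cdots a_{\sigma(n)},\ \sigma\in H\rangle$. For a subgroup $H$ of $\operatorname{Sym}_n$ and $1\leq i\leq n$, $H_i=\{\sigma\in H\mid \sigma(i)=i\}$ is the stabilizer of $i$ in $H$; $\mathrm{id}$ is the identity permutation. A monoid is cancellative if it is both left and right cancellative. *)

theory Defs
  imports "HOL-Algebra.Sym_Groups"
begin

text \<open>Words over the alphabet a_1,...,a_n are lists of indices in {1..n}.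
  The word a_1 a_2 ... a_n is [1..<Suc n]; the word a_{s(1)} ... a_{s(n)} is map s [1..<Suc n].\<close>

definition base_word :: "nat \<Rightarrow> nat list" where
  "base_word n = [1..<Suc n]"

definition perm_word :: "nat \<Rightarrow> (nat \<Rightarrow> nat) \<Rightarrow> nat list" where
  "perm_word n s = map s [1..<Suc n]"

inductive pres_eq :: "nat \<Rightarrow> (nat \<Rightarrow> nat) set \<Rightarrow> nat list \<Rightarrow> nat list \<Rightarrow> bool"
  for n :: nat and H :: "(nat \<Rightarrow> nat) set" where
  rel: "s \<in> H \<Longrightarrow> pres_eq n H (u @ base_word n @ v) (u @ perm_word n s @ v)"
| refl: "pres_eq n H w w"
| sym: "pres_eq n H w w' \<Longrightarrow> pres_eq n H w' w"
| trans: "pres_eq n H w w' \<Longrightarrow> pres_eq n H w' w'' \<Longrightarrow> pres_eq n H w w''"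

definition words :: "nat \<Rightarrow> nat list set" where
  "words n = {w. set w \<subseteq> {1..n}}"

definition cancellative_pres :: "nat \<Rightarrow> (nat \<Rightarrow> nat) set \<Rightarrow> bool" where
  "cancellative_pres n H \<longleftrightarrow>
     (\<forall>u\<in>words n. \<forall>v\<in>words n. \<forall>w\<in>words n.
        (pres_eq n H (u @ v) (u @ w) \<longrightarrow> pres_eq n H v w) \<and>
        (pres_eq n H (v @ u) (w @ u) \<longrightarrow> pres_eq n H v w))"

definition stabilizer :: "(nat \<Rightarrow> nat) set \<Rightarrow> nat \<Rightarrow> (nat \<Rightarrow> nat) set" where
  "stabilizer H i = {s \<in> H. s i = i}"

end

theory Submission imports Defs begin

text \<open>The defining words \<open>w\<^sub>\<sigma> = a\<^sub>\<sigma>\<^sub>1 \<dots> a\<^sub>\<sigma>\<^sub>n\<close>, \<open>\<sigma> \<in> H\<close>, all have length \<open>n\<close> and lie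
  in one class, so the congruence is generated by exchanging a factor \<open>w\<^sub>\<sigma>\<close> for \<open>w\<^sub>\<tau>\<close>.
  If \<open>H\<^sub>1\<close> is trivial, distinct \<open>w\<^sub>\<sigma>\<close> have distinct first letters, and an Adian-type induction
  on length normalises every chain of exchanges from \<open>x u\<close> to \<open>y v\<close>: either \<open>x = y\<close> and
  \<open>u \<sim> v\<close>, or \<open>u \<sim> t z\<close> and \<open>v \<sim> t' z\<close> where \<open>x t\<close> and \<open>y t'\<close> are defining words. For
  \<open>x = y\<close> the second case collapses to the first, which is left cancellation; reversing all words,
  \<open>H\<^sub>n = {id}\<close> gives right cancellation. Conversely, cancelling \<open>a\<^sub>1\<close> in the relation of some
  \<open>id \<noteq> \<sigma> \<in> H\<^sub>1\<close> would identify two distinct words of length \<open>n - 1\<close>, but no relation applies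
  to words shorter than \<open>n\<close>.\<close>

definition factor_swap :: "'a list set \<Rightarrow> 'a list \<Rightarrow> 'a list \<Rightarrow> bool" where
  "factor_swap W u v \<longleftrightarrow> (\<exists>a b p q. p \<in> W \<and> q \<in> W \<and> u = a @ p @ b \<and> v = a @ q @ b)"

abbreviation swap_equiv :: "'a list set \<Rightarrow> 'a list \<Rightarrow> 'a list \<Rightarrow> bool" where
  "swap_equiv W \<equiv> (factor_swap W)\<^sup>*\<^sup>*"

lemma rtranclp_map:
  assumes "r\<^sup>*\<^sup>* x y" and "\<And>x y. r x y \<Longrightarrow> s (f x) (f y)"
  shows "s\<^sup>*\<^sup>* (f x) (f y)"
  using assms(1) by induction (auto intro: rtranclp.rtrancl_into_rtrancl assms(2))

lemma swap_equiv_sym: "swap_equiv W u v \<Longrightarrow> swap_equiv W v u"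
  by (rule sympD[OF symp_rtranclp]) (auto simp: symp_def factor_swap_def)

lemma swap_equiv_append_left: "swap_equiv W u v \<Longrightarrow> swap_equiv W (c @ u) (c @ v)"
  by (erule rtranclp_map) (unfold factor_swap_def, metis append.assoc)

lemma swap_equiv_rev: "swap_equiv W u v \<Longrightarrow> swap_equiv (rev ` W) (rev u) (rev v)"
  by (erule rtranclp_map) (fastforce simp: factor_swap_def)

lemma swap_equiv_length:
  assumes "\<And>p q. p \<in> W \<Longrightarrow> q \<in> W \<Longrightarrow> length p = length q" and "swap_equiv W u v"
  shows "length u = length v"
  using assms(2) by induction (auto simp: factor_swap_def dest: assms(1))

lemma swap_equiv_short_eq:
  assumes "\<forall>p\<in>W. length p = k" and "swap_equiv W u v" and "length u < k"
  shows "u = v"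
  using assms(2,3) by induction (auto simp: factor_swap_def dest: bspec[OF assms(1)])

lemma swap_equiv_cancel_prefix:
  assumes cancel: "\<And>c b z. length b < m \<Longrightarrow> swap_equiv W (c # b) (c # z) \<Longrightarrow> swap_equiv W b z"
    and "swap_equiv W (c @ b) (c @ z)" and "length (c @ b) \<le> m"
  shows "swap_equiv W b z"
  using assms(2,3)
proof (induction c)
  case (Cons a c)
  then show ?case using cancel[of "c @ b" a "c @ z"] by simp
qed simp

text \<open>The invariant of the left-cancellation induction.\<close>

definition heads_linked :: "'a list set \<Rightarrow> 'a \<Rightarrow> 'a list \<Rightarrow> 'a \<Rightarrow> 'a list \<Rightarrow> bool" where
  "heads_linked W x u y v \<longleftrightarrow> (x = y \<and> swap_equiv W u v) \<or>
     (\<exists>p q z. p \<in> W \<and> q \<in> W \<and> p \<noteq> [] \<and> q \<noteq> [] \<and> hd p = x \<and> hd q = y \<and>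
        swap_equiv W u (tl p @ z) \<and> swap_equiv W v (tl q @ z))"

lemma heads_linked_swap_tail:
  assumes linked: "heads_linked W x u y v'" and swap: "factor_swap W v v'"
  shows "heads_linked W x u y v"
proof -
  have vv': "swap_equiv W v v'"
    using swap by blast
  from linked consider "x = y" "swap_equiv W u v'"
    | p q z where "p \<in> W" "q \<in> W" "p \<noteq> []" "q \<noteq> []" "hd p = x" "hd q = y"
      "swap_equiv W u (tl p @ z)" "swap_equiv W v' (tl q @ z)"
    unfolding heads_linked_def by blast
  then show ?thesis
  proof cases
    case 1
    then have "swap_equiv W u v"
      using swap_equiv_sym[OF vv'] by (meson rtranclp_trans)
    then show ?thesis unfolding heads_linked_def using 1 by blast
  next
    case (2 p q z)
    then have "swap_equiv W v (tl q @ z)"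
      using vv' by (blast intro: rtranclp_trans)
    then show ?thesis unfolding heads_linked_def using 2 by blast
  qed
qed

locale head_distinct_relators =
  fixes W :: "'a list set"
  assumes same_length: "\<And>p q. p \<in> W \<Longrightarrow> q \<in> W \<Longrightarrow> length p = length q"
    and inj_hd: "inj_on hd W"
begin

lemma distinct_relators_heads:
  assumes "p \<in> W" "q \<in> W" "p \<noteq> q"
  shows "p \<noteq> [] \<and> q \<noteq> [] \<and> hd p \<noteq> hd q"
  using assms same_length[OF assms(1,2)] inj_onD[OF inj_hd] by (metis length_0_conv)

lemma heads_linked_same_head: "heads_linked W x u x v \<Longrightarrow> swap_equiv W u v"
  unfolding heads_linked_def
  by (metis inj_onD[OF inj_hd] swap_equiv_sym rtranclp_trans)

lemma heads_linked_swap_front: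
  assumes cancel: "\<And>c b z. length b < m \<Longrightarrow> swap_equiv W (c # b) (c # z) \<Longrightarrow> swap_equiv W b z"
    and linked: "heads_linked W x u (hd p) (tl p @ b)" and len: "length (tl p @ b) = m"
    and pq: "p \<in> W" "q \<in> W" "p \<noteq> []" "q \<noteq> []"
  shows "heads_linked W x u (hd q) (tl q @ b)"
proof -
  from linked consider "x = hd p" "swap_equiv W u (tl p @ b)"
    | p' q' z where "p' \<in> W" "q' \<in> W" "p' \<noteq> []" "hd p' = x" "hd q' = hd p"
      "swap_equiv W u (tl p' @ z)" "swap_equiv W (tl p @ b) (tl q' @ z)"
    unfolding heads_linked_def by blast
  then show ?thesis
  proof cases
    case 1
    then show ?thesis unfolding heads_linked_def using pq by blast
  next
    case (2 p' q' z)
    have "q' = p"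
      using 2 pq(1) inj_onD[OF inj_hd] by metis
    then have "swap_equiv W b z"
      using 2 len by (auto intro: swap_equiv_cancel_prefix[OF cancel])
    then have "swap_equiv W (tl q @ b) (tl q @ z)"
      by (rule swap_equiv_append_left)
    then show ?thesis unfolding heads_linked_def using 2 pq by blast
  qed
qed

lemma heads_linked_step:
  assumes cancel: "\<And>c b z. length b < m \<Longrightarrow> swap_equiv W (c # b) (c # z) \<Longrightarrow> swap_equiv W b z"
    and linked: "heads_linked W x u y' v'" and len: "length v' = m"
    and step: "factor_swap W (y' # v') (y # v)"
  shows "heads_linked W x u y v"
proof -
  obtain a b p q where pq: "p \<in> W" "q \<in> W" "y' # v' = a @ p @ b" "y # v = a @ q @ b"
    using step unfolding factor_swap_def by blast
  show ?thesis
  proof (cases a)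
    case Nil
    show ?thesis
    proof (cases "p = q")
      case True
      then have "y' # v' = y # v" using pq(3,4) by simp
      then show ?thesis using linked by simp
    next
      case False
      then have "p \<noteq> []" "q \<noteq> []"
        using distinct_relators_heads pq(1,2) by auto
      moreover from this have "y' = hd p" "v' = tl p @ b" "y = hd q" "v = tl q @ b"
        using pq(3,4) Nil by (auto simp: neq_Nil_conv)
      ultimately show ?thesis
        using heads_linked_swap_front[OF cancel _ _ pq(1,2)] linked len by simp
    qed
  next
    case (Cons a0 a')
    then have "y' = y" and "factor_swap W v v'"
      using pq unfolding factor_swap_def by auto
    then show ?thesis
      using heads_linked_swap_tail linked by simp
  qed
qed

lemma heads_linked_if_swap_equiv:
  assumes cancel: "\<And>c b z. length b < m \<Longrightarrow> swap_equiv W (c # b) (c # z) \<Longrightarrow> swap_equiv W b z"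
    and "length u = m" and "swap_equiv W (x # u) (y # v)"
  shows "heads_linked W x u y v"
proof -
  have "\<forall>y v. w = y # v \<longrightarrow> heads_linked W x u y v" if "swap_equiv W (x # u) w" for w
    using that
  proof induction
    case base
    then show ?case unfolding heads_linked_def by simp
  next
    case (step w' w)
    have "length w' = Suc m"
      using swap_equiv_length[OF same_length step(1)] \<open>length u = m\<close> by simp
    then obtain y' v' where w': "w' = y' # v'" and len: "length v' = m"
      by (cases w') auto
    have linked: "heads_linked W x u y' v'"
      using step.IH w' by blast
    show ?case
      using heads_linked_step[of m x u y' v'] cancel linked len step(2) w' by blast
  qed
  then show ?thesis using assms(3) by blast
qed

lemma swap_equiv_cancel_Cons: "swap_equiv W (c # u) (c # v) \<Longrightarrow> swap_equiv W u v"
proof (induction "length u" arbitrary: c u v rule: less_induct)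
  case less
  have "heads_linked W c u c v"
    using heads_linked_if_swap_equiv[of "length u" u c c v] less by blast
  then show ?case
    by (rule heads_linked_same_head)
qed

lemma swap_equiv_cancel_left: "swap_equiv W (c @ u) (c @ v) \<Longrightarrow> swap_equiv W u v"
  by (induction c) (auto dest: swap_equiv_cancel_Cons)

end

lemma swap_equiv_cancel_right:
  assumes same_length: "\<And>p q. p \<in> W \<Longrightarrow> q \<in> W \<Longrightarrow> length p = length q"
    and "inj_on last W" and "swap_equiv W (u @ c) (v @ c)"
  shows "swap_equiv W u v"
proof -
  interpret rev: head_distinct_relators "rev ` W"
  proof
    show "length p = length q" if "p \<in> rev ` W" "q \<in> rev ` W" for p q
      using that by (auto dest: same_length)
    show "inj_on hd (rev ` W)"
      using assms(2) by (intro inj_on_imageI) (simp add: comp_def hd_rev)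
  qed
  have "swap_equiv (rev ` W) (rev c @ rev u) (rev c @ rev v)"
    using swap_equiv_rev[OF assms(3)] by simp
  then have "swap_equiv (rev ` W) (rev u) (rev v)"
    by (rule rev.swap_equiv_cancel_left)
  then have "swap_equiv (rev ` rev ` W) (rev (rev u)) (rev (rev v))"
    by (rule swap_equiv_rev)
  then show ?thesis
    by (simp add: image_image)
qed

lemma base_word_eq_perm_word_id: "base_word n = perm_word n id"
  by (simp add: base_word_def perm_word_def)

lemma length_perm_word [simp]: "length (perm_word n s) = n"
  by (simp add: perm_word_def)

lemma hd_perm_word: "1 \<le> n \<Longrightarrow> hd (perm_word n s) = s 1"
  by (simp add: perm_word_def upt_conv_Cons del: upt_Suc)

lemma last_perm_word: "1 \<le> n \<Longrightarrow> last (perm_word n s) = s n"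
  by (simp add: perm_word_def last_map)

lemma perm_word_eq_Cons: "1 \<le> n \<Longrightarrow> perm_word n s = s 1 # tl (perm_word n s)"
  by (simp add: perm_word_def upt_conv_Cons del: upt_Suc)

lemma perm_word_eq_snoc: "1 \<le> n \<Longrightarrow> perm_word n s = butlast (perm_word n s) @ [s n]"
  by (simp add: perm_word_def)

lemma append_in_words_iff: "u @ v \<in> words n \<longleftrightarrow> u \<in> words n \<and> v \<in> words n"
  by (simp add: words_def)

lemma perm_word_in_words: "s permutes {1..n} \<Longrightarrow> perm_word n s \<in> words n"
  by (simp add: words_def perm_word_def permutes_image atLeastLessThanSuc_atLeastAtMost del: upt_Suc)

lemma perm_word_inj:
  assumes "s permutes {1..n}" "t permutes {1..n}" and "perm_word n s = perm_word n t"
  shows "s = t"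
proof
  fix i
  show "s i = t i"
  proof (cases "i \<in> {1..n}")
    case True
    then show ?thesis using assms(3) by (simp add: perm_word_def map_eq_conv del: upt_Suc)
  next
    case False
    then show ?thesis using assms(1,2) by (simp add: permutes_not_in)
  qed
qed

lemma pres_eq_iff_swap_equiv:
  assumes "id \<in> H"
  shows "pres_eq n H u v \<longleftrightarrow> swap_equiv (perm_word n ` H) u v"
proof
  show "swap_equiv (perm_word n ` H) u v" if "pres_eq n H u v"
    using that
  proof induction
    case (rel s u v)
    then have "factor_swap (perm_word n ` H) (u @ base_word n @ v) (u @ perm_word n s @ v)"
      using assms unfolding factor_swap_def base_word_eq_perm_word_id by blast
    then show ?case by blast
  qed (auto dest: swap_equiv_sym)
  show "pres_eq n H u v" if "swap_equiv (perm_word n ` H) u v"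
    using that
  proof induction
    case (step y z)
    then obtain a b s t where "s \<in> H" "t \<in> H"
        "y = a @ perm_word n s @ b" "z = a @ perm_word n t @ b"
      unfolding factor_swap_def by blast
    then have "pres_eq n H y z"
      by (metis pres_eq.rel pres_eq.sym pres_eq.trans)
    then show ?case using step.IH pres_eq.trans by blast
  qed (rule pres_eq.refl)
qed

lemma pres_eq_short_eq:
  assumes "id \<in> H" and "pres_eq n H v w" and "length v < n"
  shows "v = w"
proof (rule swap_equiv_short_eq)
  show "swap_equiv (perm_word n ` H) v w"
    using assms(1,2) pres_eq_iff_swap_equiv by blast
qed (use assms(3) in auto)

lemma permutes_if_in_subgroup: "subgroup H (sym_group n) \<Longrightarrow> s \<in> H \<Longrightarrow> s permutes {1..n}"
  using subgroup.mem_carrier[of H "sym_group n" s] by (simp add: sym_group_carrier)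

lemma id_in_subgroup: "subgroup H (sym_group n) \<Longrightarrow> id \<in> H"
  using subgroup.one_closed[of H "sym_group n"] by (simp add: sym_group_one)

lemma inj_on_apply_if_stabilizer_trivial:
  assumes sg: "subgroup H (sym_group n)" and stab: "stabilizer H i = {id}"
  shows "inj_on (\<lambda>s. s i) H"
proof (rule inj_onI)
  fix s t assume s: "s \<in> H" and t: "t \<in> H" and eq: "s i = t i"
  have t_perm: "t permutes {1..n}"
    using permutes_if_in_subgroup[OF sg t] .
  have "inv' t \<in> H"
    using subgroup.m_inv_closed[OF sg t] subgroup.mem_carrier[OF sg t] by simp
  then have "inv' t \<circ> s \<in> H"
    using subgroup.m_closed[OF sg _ s] by (simp add: sym_group_mult)
  moreover have "(inv' t \<circ> s) i = i"
    using eq permutes_inverses(2)[OF t_perm] by simp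
  ultimately have "inv' t \<circ> s \<in> stabilizer H i"
    unfolding stabilizer_def by simp
  then have "inv' t \<circ> s = id"
    using stab by simp
  have "s = (t \<circ> inv' t) \<circ> s"
    using permutes_inv_o(1)[OF t_perm] by simp
  also have "\<dots> = t \<circ> (inv' t \<circ> s)"
    by (simp add: comp_assoc)
  also have "\<dots> = t"
    using \<open>inv' t \<circ> s = id\<close> by simp
  finally show "s = t" .
qed

lemma inj_on_hd_perm_words:
  assumes "inj_on (\<lambda>s. s 1) H"
  shows "inj_on hd (perm_word n ` H)"
proof (cases "n = 0")
  case True
  then show ?thesis by (auto simp: inj_on_def perm_word_def)
next
  case False
  then show ?thesis
    using assms by (intro inj_on_imageI) (simp add: comp_def hd_perm_word)
qed

lemma inj_on_last_perm_words:
  assumes "inj_on (\<lambda>s. s n) H"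
  shows "inj_on last (perm_word n ` H)"
proof (cases "n = 0")
  case True
  then show ?thesis by (auto simp: inj_on_def perm_word_def)
next
  case False
  then show ?thesis
    using assms by (intro inj_on_imageI) (simp add: comp_def last_perm_word)
qed

lemma cancellative_if_stabilizers_trivial:
  assumes sg: "subgroup H (sym_group n)"
    and "stabilizer H 1 = {id}" and "stabilizer H n = {id}"
  shows "cancellative_pres n H"
proof -
  let ?W = "perm_word n ` H"
  have same_length: "length p = length q" if "p \<in> ?W" "q \<in> ?W" for p q
    using that by auto
  interpret head_distinct_relators ?W
    using same_length inj_on_hd_perm_words inj_on_apply_if_stabilizer_trivial[OF sg assms(2)]
    by unfold_locales
  have "inj_on last ?W"
    using inj_on_last_perm_words inj_on_apply_if_stabilizer_trivial[OF sg assms(3)] .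
  then show ?thesis
    unfolding cancellative_pres_def pres_eq_iff_swap_equiv[OF id_in_subgroup[OF sg]]
    using swap_equiv_cancel_left swap_equiv_cancel_right[OF same_length] by blast
qed

lemma eq_id_if_pres_eq_complements:
  assumes sg: "subgroup H (sym_group n)" and s: "s \<in> H"
    and "pres_eq n H v w" and "length v < n"
    and "perm_word n id = x @ v @ y" and "perm_word n s = x @ w @ y"
  shows "s = id"
proof -
  have "v = w"
    using pres_eq_short_eq[OF id_in_subgroup[OF sg] assms(3,4)] .
  then have "perm_word n s = perm_word n id"
    using assms(5,6) by simp
  then show ?thesis
    using perm_word_inj permutes_if_in_subgroup[OF sg s] permutes_id by blast
qed

lemma stabilizer_first_trivial_if_left_cancellative:
  assumes sg: "subgroup H (sym_group n)"
    and cancel: "\<forall>u\<in>words n. \<forall>v\<in>words n. \<forall>w\<in>words n.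
      pres_eq n H (u @ v) (u @ w) \<longrightarrow> pres_eq n H v w"
  shows "stabilizer H 1 = {id}"
proof -
  have "s = id" if s: "s \<in> H" "s 1 = 1" for s
  proof (cases "n = 0")
    case True
    then show ?thesis using permutes_if_in_subgroup[OF sg s(1)] by simp
  next
    case False
    then obtain v w where split: "perm_word n id = [1] @ v" "perm_word n s = [1] @ w"
      using perm_word_eq_Cons[of n id] perm_word_eq_Cons[of n s] s(2) by fastforce
    have "pres_eq n H ([1] @ v) ([1] @ w)"
      using pres_eq.rel[OF s(1), where n = n and u = "[]" and v = "[]"] split by (simp add: base_word_eq_perm_word_id)
    moreover have "[1] \<in> words n" "v \<in> words n" "w \<in> words n"
      using perm_word_in_words[OF permutes_id[of "{1..n}"]]
        perm_word_in_words[OF permutes_if_in_subgroup[OF sg s(1)]]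
      unfolding split append_in_words_iff by simp_all
    ultimately have "pres_eq n H v w"
      using cancel by blast
    moreover have "length v < n"
      using split(1) False length_perm_word[of n id] by simp
    ultimately show ?thesis
      by (rule eq_id_if_pres_eq_complements[OF sg s(1), where x = "[1]" and y = "[]"]) (simp_all add: split)
  qed
  then show ?thesis
    using id_in_subgroup[OF sg] unfolding stabilizer_def by auto
qed

lemma stabilizer_last_trivial_if_right_cancellative:
  assumes sg: "subgroup H (sym_group n)"
    and cancel: "\<forall>u\<in>words n. \<forall>v\<in>words n. \<forall>w\<in>words n.
      pres_eq n H (v @ u) (w @ u) \<longrightarrow> pres_eq n H v w"
  shows "stabilizer H n = {id}"
proof -
  have "s = id" if s: "s \<in> H" "s n = n" for s
  proof (cases "n = 0")
    case True
    then show ?thesis using permutes_if_in_subgroup[OF sg s(1)] by simp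
  next
    case False
    then obtain v w where split: "perm_word n id = v @ [n]" "perm_word n s = w @ [n]"
      using perm_word_eq_snoc[of n id] perm_word_eq_snoc[of n s] s(2) by fastforce
    have "pres_eq n H (v @ [n]) (w @ [n])"
      using pres_eq.rel[OF s(1), where n = n and u = "[]" and v = "[]"] split by (simp add: base_word_eq_perm_word_id)
    moreover have "[n] \<in> words n" "v \<in> words n" "w \<in> words n"
      using perm_word_in_words[OF permutes_id[of "{1..n}"]]
        perm_word_in_words[OF permutes_if_in_subgroup[OF sg s(1)]]
      unfolding split append_in_words_iff by simp_all
    ultimately have "pres_eq n H v w"
      using cancel by blast
    moreover have "length v < n"
      using split(1) False length_perm_word[of n id] by simp
    ultimately show ?thesis
      by (rule eq_id_if_pres_eq_complements[OF sg s(1), where x = "[]" and y = "[n]"]) (simp_all add: split)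
  qed
  then show ?thesis
    using id_in_subgroup[OF sg] unfolding stabilizer_def by auto
qed

theorem theorem3p1:
  fixes n :: nat and H :: "(nat \<Rightarrow> nat) set"
  assumes "subgroup H (sym_group n)"
    and "\<forall>s\<in>H. \<forall>t\<in>H. s \<circ> t = t \<circ> s"
  shows "cancellative_pres n H \<longleftrightarrow> stabilizer H 1 = {id} \<and> stabilizer H n = {id}"
  using cancellative_if_stabilizers_trivial[OF assms(1)]
    stabilizer_first_trivial_if_left_cancellative[OF assms(1)]
    stabilizer_last_trivial_if_right_cancellative[OF assms(1)]
  unfolding cancellative_pres_def by blast

end
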